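(* Let $V=[n]$, let $F:2^V\to\mathbb{R}$ be a submodular set function, $Z=\sum_{S\subseteq V}\exp(F(S))$, and for $x\in(0,1)^n$ let $$\mathrm{KL}(x)=-\sum_{S\subseteq V}\prod_{i\in S}x_i\prod_{j\notin S}(1-x_j)\,F(S)+\sum_{i=1}^n\big[x_i\log x_i+(1-x_i)\log(1-x_i)\big]+\log Z.$$ Then $\mathrm{KL}$ is DR-supermodular on $(0,1)^n$.
   Context: A function $h$ on a product of intervals is DR-submodular if for all $a\le b$ (componentwise) in its domain, all $i\in[n]$, and all $k\ge0$ with $a+ke_i,b+ke_i$ in the domain, $h(a+ke_i)-h(a)\ge h(b+ke_i)-h(b)$; $h$ is DR-supermodular if $-h$ is DR-submodular. $F$ submodular means $F(A)+F(B)\ge F(A\cup B)+F(A\cap B)$ for all $A,B\subseteq V$. *)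

theory Defs
  imports "HOL-Analysis.Analysis"
begin

definition submodular_on :: "nat set \<Rightarrow> (nat set \<Rightarrow> real) \<Rightarrow> bool" where
  "submodular_on V F \<longleftrightarrow>
     (\<forall>A B. A \<subseteq> V \<longrightarrow> B \<subseteq> V \<longrightarrow> F A + F B \<ge> F (A \<union> B) + F (A \<inter> B))"

text \<open>Points of R^n are represented as functions nat => real that vanish outside {0..<n}.
  The open unit cube (0,1)^n:\<close>

definition open_cube :: "nat \<Rightarrow> (nat \<Rightarrow> real) set" where
  "open_cube n = {x. (\<forall>i<n. 0 < x i \<and> x i < 1) \<and> (\<forall>i\<ge>n. x i = 0)}"

definition DR_submodular_on :: "nat \<Rightarrow> (nat \<Rightarrow> real) set \<Rightarrow> ((nat \<Rightarrow> real) \<Rightarrow> real) \<Rightarrow> bool" where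
  "DR_submodular_on n D h \<longleftrightarrow>
     (\<forall>a b i k. a \<in> D \<longrightarrow> b \<in> D \<longrightarrow> (\<forall>j<n. a j \<le> b j) \<longrightarrow> i < n \<longrightarrow> k \<ge> 0 \<longrightarrow>
        a(i := a i + k) \<in> D \<longrightarrow> b(i := b i + k) \<in> D \<longrightarrow>
        h (a(i := a i + k)) - h a \<ge> h (b(i := b i + k)) - h b)"

definition DR_supermodular_on :: "nat \<Rightarrow> (nat \<Rightarrow> real) set \<Rightarrow> ((nat \<Rightarrow> real) \<Rightarrow> real) \<Rightarrow> bool" where
  "DR_supermodular_on n D h \<longleftrightarrow> DR_submodular_on n D (\<lambda>x. - h x)"

definition partition_fn :: "nat \<Rightarrow> (nat set \<Rightarrow> real) \<Rightarrow> real" where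
  "partition_fn n F = (\<Sum>S\<in>Pow {0..<n}. exp (F S))"

definition KL :: "nat \<Rightarrow> (nat set \<Rightarrow> real) \<Rightarrow> (nat \<Rightarrow> real) \<Rightarrow> real" where
  "KL n F x =
     - (\<Sum>S\<in>Pow {0..<n}. (\<Prod>i\<in>S. x i) * (\<Prod>j\<in>{0..<n} - S. 1 - x j) * F S)
     + (\<Sum>i<n. x i * ln (x i) + (1 - x i) * ln (1 - x i))
     + ln (partition_fn n F)"

end

theory Submission
  imports Defs
begin

text \<open>
  Along a coordinate direction \<open>i\<close> the multilinear part of \<open>KL\<close> is affine in \<open>x i\<close>, with
  slope the expectation, under the product measure with marginals \<open>x\<close>, of the marginal gain
  \<open>F (insert i S) - F S\<close>. By submodularity this gain is antitone in \<open>S\<close>, so its expectation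
  decreases as \<open>x\<close> grows; hence \<open>-E[F]\<close> has increasing increments. The entropy term is
  separable and convex in each coordinate, so its increments increase as well.
\<close>

definition product_weight :: "nat set \<Rightarrow> (nat \<Rightarrow> real) \<Rightarrow> nat set \<Rightarrow> real" where
  "product_weight V x S = (\<Prod>i\<in>S. x i) * (\<Prod>j\<in>V - S. 1 - x j)"

definition multilinear_ext :: "nat set \<Rightarrow> (nat \<Rightarrow> real) \<Rightarrow> (nat set \<Rightarrow> real) \<Rightarrow> real" where
  "multilinear_ext V x G = (\<Sum>S\<in>Pow V. product_weight V x S * G S)"

definition neg_entropy :: "real \<Rightarrow> real" where
  "neg_entropy t = t * ln t + (1 - t) * ln (1 - t)"

lemma product_weight_nonneg:
  "\<forall>j\<in>V. 0 \<le> x j \<and> x j \<le> 1 \<Longrightarrow> S \<subseteq> V \<Longrightarrow> 0 \<le> product_weight V x S"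
  unfolding product_weight_def by (intro mult_nonneg_nonneg prod_nonneg) auto

lemma multilinear_ext_insert:
  assumes "finite V" "j \<notin> V"
  shows "multilinear_ext (insert j V) x G
       = x j * multilinear_ext V x (\<lambda>S. G (insert j S)) + (1 - x j) * multilinear_ext V x G"
proof -
  have inj: "inj_on (insert j) (Pow V)"
    using assms(2) unfolding inj_on_def by (metis PowD insert_ident subsetD)
  have weight_out: "product_weight (insert j V) x S = (1 - x j) * product_weight V x S"
    if "S \<subseteq> V" for S
  proof -
    have "insert j V - S = insert j (V - S)" using that assms(2) by auto
    thus ?thesis unfolding product_weight_def using assms by (simp add: algebra_simps)
  qed
  have weight_in: "product_weight (insert j V) x (insert j S) = x j * product_weight V x S"
    if "S \<subseteq> V" for S
  proof -
    have "insert j V - insert j S = V - S" "j \<notin> S" using that assms(2) by auto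
    moreover have "finite S" using that assms(1) finite_subset by blast
    ultimately show ?thesis unfolding product_weight_def by (simp add: algebra_simps)
  qed
  have "multilinear_ext (insert j V) x G
      = (\<Sum>S\<in>Pow V. product_weight (insert j V) x S * G S)
      + (\<Sum>S\<in>insert j ` Pow V. product_weight (insert j V) x S * G S)"
    unfolding multilinear_ext_def Pow_insert using assms by (intro sum.union_disjoint) auto
  also have "(\<Sum>S\<in>insert j ` Pow V. product_weight (insert j V) x S * G S)
      = (\<Sum>S\<in>Pow V. x j * (product_weight V x S * G (insert j S)))"
    by (simp add: sum.reindex[OF inj] weight_in mult.assoc)
  also have "(\<Sum>S\<in>Pow V. product_weight (insert j V) x S * G S)
      = (\<Sum>S\<in>Pow V. (1 - x j) * (product_weight V x S * G S))"
    by (intro sum.cong refl) (simp add: weight_out)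
  finally show ?thesis
    unfolding multilinear_ext_def by (simp add: sum_distrib_left[symmetric] add.commute)
qed

lemma multilinear_ext_cong:
  "\<forall>j\<in>V. x j = y j \<Longrightarrow> multilinear_ext V x G = multilinear_ext V y G"
  unfolding multilinear_ext_def product_weight_def
  by (intro sum.cong refl arg_cong2[where f="(*)"] prod.cong) auto

lemma multilinear_ext_fun_upd:
  assumes "finite V" "i \<in> V"
  shows "multilinear_ext V (x(i := v)) G
       = v * multilinear_ext (V - {i}) x (\<lambda>S. G (insert i S))
       + (1 - v) * multilinear_ext (V - {i}) x G"
proof -
  have "multilinear_ext V (x(i := v)) G = multilinear_ext (insert i (V - {i})) (x(i := v)) G"
    using assms(2) by (simp add: insert_absorb)
  also have "\<dots> = v * multilinear_ext (V - {i}) (x(i := v)) (\<lambda>S. G (insert i S))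
                + (1 - v) * multilinear_ext (V - {i}) (x(i := v)) G"
    using multilinear_ext_insert[of "V - {i}" i "x(i := v)" G] assms(1) by simp
  finally show ?thesis by (simp add: multilinear_ext_cong[of "V - {i}" "x(i := v)" x])
qed

lemma multilinear_ext_mono:
  assumes "\<forall>j\<in>V. 0 \<le> x j \<and> x j \<le> 1" "\<forall>S. S \<subseteq> V \<longrightarrow> G S \<le> H S"
  shows "multilinear_ext V x G \<le> multilinear_ext V x H"
  unfolding multilinear_ext_def using assms product_weight_nonneg[OF assms(1)]
  by (intro sum_mono mult_left_mono) auto

text \<open>Raising one coordinate shifts weight from \<open>S\<close> to \<open>insert j S\<close>, where an antitone \<open>G\<close> is smaller.\<close>

lemma multilinear_ext_antimono:
  assumes "finite V" "\<forall>S T. S \<subseteq> T \<longrightarrow> T \<subseteq> V \<longrightarrow> G T \<le> G S"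
    "\<forall>j\<in>V. 0 \<le> a j \<and> a j \<le> b j \<and> b j \<le> 1"
  shows "multilinear_ext V b G \<le> multilinear_ext V a G"
  using assms
proof (induction V arbitrary: G rule: finite_induct)
  case empty
  then show ?case by (simp add: multilinear_ext_def product_weight_def)
next
  case (insert j V)
  define G1 where "G1 = (\<lambda>S. G (insert j S))"
  let ?M = "multilinear_ext V"
  have ab: "\<forall>j\<in>V. 0 \<le> a j \<and> a j \<le> b j \<and> b j \<le> 1" and bj: "0 \<le> a j" "a j \<le> b j" "b j \<le> 1"
    using insert.prems(2) by auto
  have "\<forall>S T. S \<subseteq> T \<longrightarrow> T \<subseteq> V \<longrightarrow> G1 T \<le> G1 S"
    unfolding G1_def using insert.prems(1) by (metis insert_mono subset_insertI2)
  then have IH1: "?M b G1 \<le> ?M a G1"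
    using insert.IH ab by blast
  have IH0: "?M b G \<le> ?M a G"
    using insert.IH ab insert.prems(1) by blast
  have G1_le: "?M a G1 \<le> ?M a G"
    using ab by (intro multilinear_ext_mono) (auto simp: G1_def intro: insert.prems(1)[rule_format])
  have "multilinear_ext (insert j V) b G = b j * ?M b G1 + (1 - b j) * ?M b G"
    using multilinear_ext_insert[OF insert.hyps] G1_def by simp
  also have "\<dots> \<le> b j * ?M a G1 + (1 - b j) * ?M a G"
    using bj IH1 IH0 by (intro add_mono mult_left_mono) auto
  also have "\<dots> = ?M a G + b j * (?M a G1 - ?M a G)" by (simp add: algebra_simps)
  also have "\<dots> \<le> ?M a G + a j * (?M a G1 - ?M a G)"
    using mult_right_mono_neg[OF bj(2), of "?M a G1 - ?M a G"] G1_le by simp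
  also have "\<dots> = multilinear_ext (insert j V) a G"
    using multilinear_ext_insert[OF insert.hyps] G1_def by (simp add: algebra_simps)
  finally show ?case .
qed

lemma submodular_on_marginal_antimono:
  assumes "submodular_on V F" "i \<in> V" "S \<subseteq> T" "T \<subseteq> V - {i}"
  shows "F (insert i T) - F T \<le> F (insert i S) - F S"
proof -
  have "F (insert i S) + F T \<ge> F (insert i S \<union> T) + F (insert i S \<inter> T)"
    using assms unfolding submodular_on_def by blast
  moreover have "insert i S \<union> T = insert i T" "insert i S \<inter> T = S" using assms(3,4) by auto
  ultimately show ?thesis by simp
qed

lemma neg_entropy_has_real_derivative:
  "0 < u \<Longrightarrow> u < 1 \<Longrightarrow> (neg_entropy has_real_derivative (ln u - ln (1 - u))) (at u)"
  unfolding neg_entropy_def[abs_def] by ((rule derivative_eq_intros refl | simp)+)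

lemma neg_entropy_increment_mono:
  assumes "0 < s" "s \<le> t" "t + k < 1" "0 \<le> k"
  shows "neg_entropy (s + k) - neg_entropy s \<le> neg_entropy (t + k) - neg_entropy t"
proof -
  let ?h = "\<lambda>u. neg_entropy (u + k) - neg_entropy u"
  have "?h s \<le> ?h t"
  proof (rule DERIV_nonneg_imp_increasing_open[OF assms(2)])
    fix u assume u: "s < u" "u < t"
    let ?d = "(ln (u + k) - ln (1 - (u + k))) - (ln u - ln (1 - u))"
    have "ln u \<le> ln (u + k)" "ln (1 - (u + k)) \<le> ln (1 - u)" using u assms by auto
    then have "0 \<le> ?d" by linarith
    moreover have "(?h has_real_derivative ?d) (at u)"
      using u assms neg_entropy_has_real_derivative[of "u + k"] neg_entropy_has_real_derivative[of u]
        DERIV_shift[of neg_entropy _ u k]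
      by (intro DERIV_diff) auto
    ultimately show "\<exists>y. (?h has_real_derivative y) (at u) \<and> 0 \<le> y" by blast
  next
    have cont: "isCont neg_entropy u" if "0 < u" "u < 1" for u
      using neg_entropy_has_real_derivative[OF that] DERIV_isCont by blast
    show "continuous_on {s..t} ?h"
      using assms by (intro continuous_at_imp_continuous_on ballI continuous_intros isCont_o2[OF _ cont] cont) auto
  qed
  then show ?thesis .
qed

lemma sum_fun_upd_diff:
  fixes f :: "'a \<Rightarrow> 'b::ab_group_add"
  assumes "finite A" "i \<in> A"
  shows "(\<Sum>l\<in>A. f ((x(i := v)) l)) - (\<Sum>l\<in>A. f (x l)) = f v - f (x i)"
proof -
  have "(\<Sum>l\<in>A - {i}. f ((x(i := v)) l)) = (\<Sum>l\<in>A - {i}. f (x l))"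
    by (intro sum.cong) auto
  then show ?thesis
    using sum.remove[OF assms, of "\<lambda>l. f ((x(i := v)) l)"] sum.remove[OF assms, of "\<lambda>l. f (x l)"]
    by (simp add: algebra_simps)
qed

lemma KL_eq_multilinear_ext:
  "KL n F x = - multilinear_ext {0..<n} x F + (\<Sum>l<n. neg_entropy (x l)) + ln (partition_fn n F)"
  by (simp add: KL_def multilinear_ext_def product_weight_def neg_entropy_def)

lemma KL_fun_upd_increment:
  assumes "i < n"
  shows "KL n F (x(i := x i + k)) - KL n F x
       = - k * multilinear_ext ({0..<n} - {i}) x (\<lambda>S. F (insert i S) - F S)
         + (neg_entropy (x i + k) - neg_entropy (x i))"
proof -
  let ?M = "multilinear_ext ({0..<n} - {i}) x"
  have "multilinear_ext {0..<n} (x(i := v)) F = v * ?M (\<lambda>S. F (insert i S)) + (1 - v) * ?M F" for v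
    using assms by (intro multilinear_ext_fun_upd) auto
  from this[of "x i + k"] this[of "x i"]
  have "multilinear_ext {0..<n} (x(i := x i + k)) F - multilinear_ext {0..<n} x F
      = k * (?M (\<lambda>S. F (insert i S)) - ?M F)"
    by (simp add: algebra_simps)
  moreover have "?M (\<lambda>S. F (insert i S)) - ?M F = ?M (\<lambda>S. F (insert i S) - F S)"
    unfolding multilinear_ext_def by (simp add: sum_subtractf algebra_simps)
  moreover have "(\<Sum>l<n. neg_entropy ((x(i := x i + k)) l)) - (\<Sum>l<n. neg_entropy (x l))
      = neg_entropy (x i + k) - neg_entropy (x i)"
    using assms by (intro sum_fun_upd_diff) auto
  ultimately show ?thesis unfolding KL_eq_multilinear_ext by (simp add: algebra_simps)
qed

theorem mainTheorem14:
  fixes n :: nat and F :: "nat set \<Rightarrow> real"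
  assumes "submodular_on {0..<n} F"
  shows "DR_supermodular_on n (open_cube n) (KL n F)"
  unfolding DR_supermodular_on_def DR_submodular_on_def
proof (intro allI impI)
  fix a b :: "nat \<Rightarrow> real" and i :: nat and k :: real
  assume a: "a \<in> open_cube n" and b: "b \<in> open_cube n" and ab: "\<forall>j<n. a j \<le> b j"
    and i: "i < n" and k: "0 \<le> k" and "a(i := a i + k) \<in> open_cube n"
    and b': "b(i := b i + k) \<in> open_cube n"
  let ?M = "\<lambda>x. multilinear_ext ({0..<n} - {i}) x (\<lambda>S. F (insert i S) - F S)"
  have "?M b \<le> ?M a"
    using a b ab assms i submodular_on_marginal_antimono[of "{0..<n}" F i]
    by (intro multilinear_ext_antimono) (auto simp: open_cube_def less_imp_le)
  then have "k * ?M b \<le> k * ?M a" using k by (rule mult_left_mono)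
  moreover have "neg_entropy (a i + k) - neg_entropy (a i) \<le> neg_entropy (b i + k) - neg_entropy (b i)"
    using a b' ab i k by (intro neg_entropy_increment_mono) (auto simp: open_cube_def)
  ultimately show "- KL n F (b(i := b i + k)) - - KL n F b \<le> - KL n F (a(i := a i + k)) - - KL n F a"
    using KL_fun_upd_increment[OF i, of F a k] KL_fun_upd_increment[OF i, of F b k] by linarith
qed

end
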